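(* Let $\mathcal R:[0,1]\times[0,\infty)\to\mathbb C$ be a measurable function for which the integrals below converge absolutely (e.g. $\mathcal R$ bounded). Then for $\lambda\in(0,1)$, \begin{align*} &\int_0^{\pi/2}\left[ \int_0^{\pi/2}\frac{\mathcal R(\cos\theta,\tan\phi)\,d\phi}{\sqrt{1-\lambda\cos^2\phi}} \right]\frac{d\theta}{\sqrt{1-\lambda\cos^2\theta}}\\={}&\int_0^{\pi/2}\left[ \int_0^{\pi/2}\mathcal R\left( \frac{\cos\theta}{\sqrt{1-\lambda\sin^2\theta\sin^2\phi}}, \sqrt{\frac{1-\lambda(1-\sin^2\theta\cos^2\phi)}{1-\lambda\sin^2\theta\sin^2\phi}}\tan\phi\right)\frac{d\phi}{\sqrt{1-\lambda+\lambda^{2}\sin^2\theta\sin^2\phi\cos^2\phi}} \right]d\theta\\={}&\int_{S^2_{+++}}\mathcal R\left(\frac{Z}{\sqrt{1-\lambda Y^{2}}},\sqrt{\frac{1-\lambda(1-X^{2})}{1-\lambda Y^{2}}} \frac{Y}{X}\right)\frac{d\sigma}{\sqrt{(1-\lambda)(1-Z^2)+\lambda^{2}Y^2X^2}}, \end{align*} where $S^2_{+++}=\{(X,Y,Z)\in\mathbb R^3:X^2+Y^2+Z^2=1,X,Y,Z>0\}$ with $(X,Y,Z)=(\sin\theta\cos\phi,\sin\theta\sin\phi,\cos\theta)$ and surface element $d\sigma=\sin\theta\,d\theta\,d\phi$. *)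

theory Defs
  imports "HOL-Analysis.Analysis"
begin

definition octant_param :: "real \<times> real \<Rightarrow> real \<times> real \<times> real" where
  "octant_param q = (sin (fst q) * cos (snd q), sin (fst q) * sin (snd q), cos (fst q))"

definition octant_square :: "(real \<times> real) set" where
  "octant_square = {0<..<pi/2} \<times> {0<..<pi/2}"

definition octant_surface_integrand ::
    "(real \<times> real \<times> real \<Rightarrow> complex) \<Rightarrow> real \<times> real \<Rightarrow> complex" where
  "octant_surface_integrand f q = sin (fst q) *\<^sub>R f (octant_param q)"

definition octant_surface_integral :: "(real \<times> real \<times> real \<Rightarrow> complex) \<Rightarrow> complex" where
  "octant_surface_integral f =
     (LINT q : octant_square | lborel \<Otimes>\<^sub>M lborel. octant_surface_integrand f q)"

definition lhs_integrand :: "(real \<times> real \<Rightarrow> complex) \<Rightarrow> real \<Rightarrow> real \<Rightarrow> real \<Rightarrow> complex" where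
  "lhs_integrand R l t p =
     (1 / (sqrt (1 - l * (cos p)\<^sup>2) * sqrt (1 - l * (cos t)\<^sup>2))) *\<^sub>R R (cos t, tan p)"

definition mid_integrand :: "(real \<times> real \<Rightarrow> complex) \<Rightarrow> real \<Rightarrow> real \<Rightarrow> real \<Rightarrow> complex" where
  "mid_integrand R l t p =
     (1 / sqrt (1 - l + l\<^sup>2 * (sin t)\<^sup>2 * (sin p)\<^sup>2 * (cos p)\<^sup>2)) *\<^sub>R
       R (cos t / sqrt (1 - l * (sin t)\<^sup>2 * (sin p)\<^sup>2),
          sqrt ((1 - l * (1 - (sin t)\<^sup>2 * (cos p)\<^sup>2)) / (1 - l * (sin t)\<^sup>2 * (sin p)\<^sup>2)) * tan p)"

definition rhs_integrand :: "(real \<times> real \<Rightarrow> complex) \<Rightarrow> real \<Rightarrow> real \<times> real \<times> real \<Rightarrow> complex" where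
  "rhs_integrand R l v = (case v of (X, Y, Z) \<Rightarrow>
     (1 / sqrt ((1 - l) * (1 - Z\<^sup>2) + l\<^sup>2 * Y\<^sup>2 * X\<^sup>2)) *\<^sub>R
       R (Z / sqrt (1 - l * Y\<^sup>2), sqrt ((1 - l * (1 - X\<^sup>2)) / (1 - l * Y\<^sup>2)) * (Y / X)))"

end

theory Submission
  imports Defs
begin

(* For c > 0 the map q |-> arctan (c tan q) is a smooth self-bijection of (0, pi/2) with
   Jacobian c / (cos^2 q + c^2 sin^2 q).  Substituting tan p = sqrt (1 - l cos^2 t) tan q in the
   inner integral of the left-hand side, exchanging the order of integration, and substituting
   tan t = sqrt (1 - l sin^2 q) tan s in the new inner integral yields the middle expression.
   Each substitution preserves the absolute integral of every section, so by Tonelli the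
   intermediate integrand stays integrable on the square and Fubini applies.  The last equality
   is the spherical parametrisation: the middle integrand is sin t times the surface integrand. *)

lemma
  fixes f :: "real \<Rightarrow> 'a::euclidean_space" and g g' :: "real \<Rightarrow> real"
  assumes S: "S \<in> sets lebesgue"
    and der: "\<And>x. x \<in> S \<Longrightarrow> (g has_field_derivative g' x) (at x within S)"
    and inj: "inj_on g S" and img: "g ` S = T"
    and f: "set_borel_measurable lborel T f"
    and fg: "set_borel_measurable lborel S (\<lambda>x. \<bar>g' x\<bar> *\<^sub>R f (g x))"
  shows set_integrable_substitution_real:
      "set_integrable lborel S (\<lambda>x. \<bar>g' x\<bar> *\<^sub>R f (g x)) \<longleftrightarrow> set_integrable lborel T f"
    and set_integral_substitution_real:
      "(LINT x:S|lborel. \<bar>g' x\<bar> *\<^sub>R f (g x)) = (LINT y:T|lborel. f y)"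
proof -
  have lebesgue_iff: "set_integrable lborel A h \<longleftrightarrow> h absolutely_integrable_on A"
    if "set_borel_measurable lborel A h" for A and h :: "real \<Rightarrow> 'a"
    using that by (simp add: set_integrable_def set_borel_measurable_def integrable_completion)
  note cov = has_absolute_integral_change_of_variables_real[OF S der inj, where f = f, unfolded img]
  show iff: "set_integrable lborel S (\<lambda>x. \<bar>g' x\<bar> *\<^sub>R f (g x)) \<longleftrightarrow> set_integrable lborel T f"
    unfolding lebesgue_iff[OF f] lebesgue_iff[OF fg] using cov by blast
  show "(LINT x:S|lborel. \<bar>g' x\<bar> *\<^sub>R f (g x)) = (LINT y:T|lborel. f y)"
  proof (cases "set_integrable lborel T f")
    case True
    then have "integral S (\<lambda>x. \<bar>g' x\<bar> *\<^sub>R f (g x)) = integral T f"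
      using cov[of "integral T f"] lebesgue_iff[OF f] by blast
    with True iff show ?thesis by (simp add: set_borel_integral_eq_integral)
  next
    case False
    with iff show ?thesis
      by (simp add: set_lebesgue_integral_def set_integrable_def not_integrable_integral_eq)
  qed
qed

lemma set_borel_measurable_section:
  fixes f :: "'a \<Rightarrow> 'b \<Rightarrow> 'c::{banach, second_countable_topology}"
  assumes "set_borel_measurable (M1 \<Otimes>\<^sub>M M2) (A \<times> B) (\<lambda>z. f (fst z) (snd z))"
    and "x \<in> A" "x \<in> space M1"
  shows "set_borel_measurable M2 B (f x)"
  using measurable_Pair2[OF assms(1)[unfolded set_borel_measurable_def] assms(3)] assms(2)
  by (simp add: set_borel_measurable_def indicator_times)

lemma set_borel_measurable_norm:
  fixes f :: "'a \<Rightarrow> 'b::{banach, second_countable_topology}"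
  assumes "set_borel_measurable M A f"
  shows "set_borel_measurable M A (\<lambda>x. norm (f x))"
proof -
  have "(\<lambda>x. norm (indicator A x *\<^sub>R f x)) \<in> borel_measurable M"
    using assms unfolding set_borel_measurable_def by measurable
  then show ?thesis by (simp add: set_borel_measurable_def)
qed

lemma (in pair_sigma_finite) set_integrable_pair_swap:
  fixes f :: "'a \<Rightarrow> 'b \<Rightarrow> 'c::{banach, second_countable_topology}"
  assumes "set_integrable (M1 \<Otimes>\<^sub>M M2) (A \<times> B) (\<lambda>z. f (fst z) (snd z))"
  shows "set_integrable (M2 \<Otimes>\<^sub>M M1) (B \<times> A) (\<lambda>z. f (snd z) (fst z))"
  using integrable_product_swap[OF assms[unfolded set_integrable_def]]
  by (simp add: set_integrable_def indicator_times split_beta' mult.commute)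

lemma (in pair_sigma_finite) set_integral_pair_eq_iterated:
  fixes f :: "'a \<Rightarrow> 'b \<Rightarrow> 'c::{banach, second_countable_topology}"
  assumes "set_integrable (M1 \<Otimes>\<^sub>M M2) (A \<times> B) (\<lambda>z. f (fst z) (snd z))"
  shows "(LINT z:A \<times> B|M1 \<Otimes>\<^sub>M M2. f (fst z) (snd z)) = (LINT x:A|M1. LINT y:B|M2. f x y)"
  using integral_fst'[OF assms[unfolded set_integrable_def]]
  by (simp add: set_lebesgue_integral_def indicator_times flip: integral_scaleR_right)

lemma (in pair_sigma_finite) set_Fubini_integral:
  fixes f :: "'a \<Rightarrow> 'b \<Rightarrow> 'c::{banach, second_countable_topology}"
  assumes "set_integrable (M1 \<Otimes>\<^sub>M M2) (A \<times> B) (\<lambda>z. f (fst z) (snd z))"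
  shows "(LINT y:B|M2. LINT x:A|M1. f x y) = (LINT x:A|M1. LINT y:B|M2. f x y)"
proof -
  have "integrable (M1 \<Otimes>\<^sub>M M2) (\<lambda>(x, y). (indicator A x * indicator B y) *\<^sub>R f x y)"
    using assms by (simp add: set_integrable_def indicator_times split_beta')
  from Fubini_integral[OF this] show ?thesis
    by (simp add: set_lebesgue_integral_def mult.commute flip: integral_scaleR_right)
qed

lemma (in pair_sigma_finite) integrable_pair_measure_by_sections:
  fixes f g :: "'a \<times> 'b \<Rightarrow> 'c::{banach, second_countable_topology}"
  assumes f: "integrable (M1 \<Otimes>\<^sub>M M2) f" and g: "g \<in> borel_measurable (M1 \<Otimes>\<^sub>M M2)"
    and sections: "\<And>x. integrable M2 (\<lambda>y. f (x, y)) \<Longrightarrow> integrable M2 (\<lambda>y. g (x, y))"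
    and norms: "\<And>x. (\<integral>y. norm (g (x, y)) \<partial>M2) = (\<integral>y. norm (f (x, y)) \<partial>M2)"
  shows "integrable (M1 \<Otimes>\<^sub>M M2) g"
proof (rule Fubini_integrable[OF g])
  show "integrable M1 (\<lambda>x. \<integral>y. norm (g (x, y)) \<partial>M2)"
    using integrable_fst'[OF integrable_norm[OF f]] by (simp add: norms)
  show "AE x in M1. integrable M2 (\<lambda>y. g (x, y))"
    using AE_integrable_fst'[OF f] by eventually_elim (rule sections)
qed

lemma set_borel_measurable_substitution_snd:
  fixes f :: "real \<Rightarrow> real \<Rightarrow> 'a::{banach, second_countable_topology}"
    and h h' :: "real \<Rightarrow> real \<Rightarrow> real"
  assumes A: "A \<in> sets lborel" and B: "B \<in> sets lborel"
    and h_B: "\<And>x y. x \<in> A \<Longrightarrow> y \<in> B \<Longrightarrow> h x y \<in> B"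
    and h_meas: "(\<lambda>z. h (fst z) (snd z)) \<in> borel_measurable (lborel \<Otimes>\<^sub>M lborel)"
    and h'_meas: "(\<lambda>z. h' (fst z) (snd z)) \<in> borel_measurable (lborel \<Otimes>\<^sub>M lborel)"
    and f: "set_borel_measurable (lborel \<Otimes>\<^sub>M lborel) (A \<times> B) (\<lambda>z. f (fst z) (snd z))"
  shows "set_borel_measurable (lborel \<Otimes>\<^sub>M lborel) (A \<times> B)
           (\<lambda>z. \<bar>h' (fst z) (snd z)\<bar> *\<^sub>R f (fst z) (h (fst z) (snd z)))"
proof -
  define F where "F z = indicator (A \<times> B) z *\<^sub>R f (fst z) (snd z)" for z
  have [measurable]: "F \<in> borel_measurable (lborel \<Otimes>\<^sub>M lborel)"
    using f by (simp add: set_borel_measurable_def F_def[abs_def])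
  note [measurable] = A B h_meas h'_meas
  have "(\<lambda>z. (indicator (A \<times> B) z * \<bar>h' (fst z) (snd z)\<bar>) *\<^sub>R F (fst z, h (fst z) (snd z)))
          \<in> borel_measurable (lborel \<Otimes>\<^sub>M lborel)"
    by measurable
  also have "(\<lambda>z. (indicator (A \<times> B) z * \<bar>h' (fst z) (snd z)\<bar>) *\<^sub>R F (fst z, h (fst z) (snd z)))
      = (\<lambda>z. indicator (A \<times> B) z *\<^sub>R (\<bar>h' (fst z) (snd z)\<bar> *\<^sub>R f (fst z) (h (fst z) (snd z))))"
    using h_B by (auto simp: F_def indicator_def)
  finally show ?thesis
    unfolding set_borel_measurable_def .
qed

lemma
  fixes f :: "real \<Rightarrow> real \<Rightarrow> 'a::euclidean_space" and h h' :: "real \<Rightarrow> real \<Rightarrow> real"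
  assumes A: "A \<in> sets lborel" and B: "B \<in> sets lborel"
    and der: "\<And>x y. x \<in> A \<Longrightarrow> y \<in> B \<Longrightarrow> (h x has_field_derivative h' x y) (at y within B)"
    and inj: "\<And>x. x \<in> A \<Longrightarrow> inj_on (h x) B"
    and img: "\<And>x. x \<in> A \<Longrightarrow> h x ` B = B"
    and h_meas: "(\<lambda>z. h (fst z) (snd z)) \<in> borel_measurable (lborel \<Otimes>\<^sub>M lborel)"
    and h'_meas: "(\<lambda>z. h' (fst z) (snd z)) \<in> borel_measurable (lborel \<Otimes>\<^sub>M lborel)"
    and f: "set_integrable (lborel \<Otimes>\<^sub>M lborel) (A \<times> B) (\<lambda>z. f (fst z) (snd z))"
  shows set_integrable_substitution_snd:
      "set_integrable (lborel \<Otimes>\<^sub>M lborel) (A \<times> B)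
         (\<lambda>z. \<bar>h' (fst z) (snd z)\<bar> *\<^sub>R f (fst z) (h (fst z) (snd z)))"
    and set_integral_substitution_snd:
      "(LINT x:A|lborel. LINT y:B|lborel. \<bar>h' x y\<bar> *\<^sub>R f x (h x y))
         = (LINT x:A|lborel. LINT y:B|lborel. f x y)"
proof -
  define g where "g x y = \<bar>h' x y\<bar> *\<^sub>R f x (h x y)" for x y
  have f_meas: "set_borel_measurable (lborel \<Otimes>\<^sub>M lborel) (A \<times> B) (\<lambda>z. f (fst z) (snd z))"
    using f unfolding set_integrable_def set_borel_measurable_def by (rule borel_measurable_integrable)
  have g_meas: "set_borel_measurable (lborel \<Otimes>\<^sub>M lborel) (A \<times> B) (\<lambda>z. g (fst z) (snd z))"
    unfolding g_def using img
    by (intro set_borel_measurable_substitution_snd A B h_meas h'_meas f_meas) blast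
  have slice:
    "(set_integrable lborel B (g x) \<longleftrightarrow> set_integrable lborel B (f x)) \<and>
     (LINT y:B|lborel. g x y) = (LINT y:B|lborel. f x y) \<and>
     (LINT y:B|lborel. norm (g x y)) = (LINT y:B|lborel. norm (f x y))" if x: "x \<in> A" for x
  proof -
    have subst: "(set_integrable lborel B (\<lambda>y. \<bar>h' x y\<bar> *\<^sub>R \<phi> (h x y)) \<longleftrightarrow> set_integrable lborel B \<phi>) \<and>
        (LINT y:B|lborel. \<bar>h' x y\<bar> *\<^sub>R \<phi> (h x y)) = (LINT y:B|lborel. \<phi> y)"
      if "set_borel_measurable lborel B \<phi>" "set_borel_measurable lborel B (\<lambda>y. \<bar>h' x y\<bar> *\<^sub>R \<phi> (h x y))"
      for \<phi> :: "real \<Rightarrow> 'b::euclidean_space"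
      using B x that
      by (intro conjI set_integrable_substitution_real set_integral_substitution_real der inj img) auto
    have fx: "set_borel_measurable lborel B (f x)"
      by (rule set_borel_measurable_section[OF f_meas x]) simp
    have gx: "set_borel_measurable lborel B (g x)"
      by (rule set_borel_measurable_section[OF g_meas x]) simp
    show ?thesis
      using subst[OF fx] subst[OF set_borel_measurable_norm[OF fx]] gx set_borel_measurable_norm[OF gx]
      by (simp add: g_def[abs_def])
  qed
  show "set_integrable (lborel \<Otimes>\<^sub>M lborel) (A \<times> B) (\<lambda>z. g (fst z) (snd z))"
    unfolding set_integrable_def
  proof (rule lborel_pair.integrable_pair_measure_by_sections)
    show "integrable (lborel \<Otimes>\<^sub>M lborel) (\<lambda>z. indicator (A \<times> B) z *\<^sub>R f (fst z) (snd z))"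
      using f unfolding set_integrable_def .
    show "(\<lambda>z. indicator (A \<times> B) z *\<^sub>R g (fst z) (snd z)) \<in> borel_measurable (lborel \<Otimes>\<^sub>M lborel)"
      using g_meas unfolding set_borel_measurable_def .
  qed (use slice in \<open>auto simp: indicator_times set_integrable_def set_lebesgue_integral_def
                      split: split_indicator\<close>)
  show "(LINT x:A|lborel. LINT y:B|lborel. g x y) = (LINT x:A|lborel. LINT y:B|lborel. f x y)"
    using slice A by (auto intro: set_lebesgue_integral_cong)
qed

definition tan_rescale :: "real \<Rightarrow> real \<Rightarrow> real" where
  "tan_rescale c q = arctan (c * tan q)"

lemma borel_measurable_tan_rescale[measurable]:
  assumes [measurable]: "c \<in> borel_measurable M" "q \<in> borel_measurable M"
  shows "(\<lambda>x. tan_rescale (c x) (q x)) \<in> borel_measurable M"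
  unfolding tan_rescale_def tan_def by measurable

lemma tan_tan_rescale: "tan (tan_rescale c q) = c * tan q"
  by (simp add: tan_rescale_def tan_arctan)

lemma tan_rescale_mem:
  assumes "c > 0" "q \<in> {0<..<pi/2}"
  shows "tan_rescale c q \<in> {0<..<pi/2}"
  using assms tan_gt_zero[of q] arctan_ubound[of "c * tan q"] by (auto simp: tan_rescale_def)

lemma tan_rescale_inverse:
  assumes "c > 0" "q \<in> {0<..<pi/2}"
  shows "tan_rescale (1 / c) (tan_rescale c q) = q"
  using assms by (simp add: tan_rescale_def tan_arctan arctan_tan)

lemma bij_betw_tan_rescale:
  assumes "c > 0"
  shows "bij_betw (tan_rescale c) {0<..<pi/2} {0<..<pi/2}"
proof (rule bij_betw_byWitness[where f' = "tan_rescale (1 / c)"])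
  show "\<forall>q\<in>{0<..<pi/2}. tan_rescale (1 / c) (tan_rescale c q) = q"
    using tan_rescale_inverse assms by blast
  show "\<forall>q\<in>{0<..<pi/2}. tan_rescale c (tan_rescale (1 / c) q) = q"
    using tan_rescale_inverse[of "1 / c"] assms by simp
  show "tan_rescale c ` {0<..<pi/2} \<subseteq> {0<..<pi/2}"
    using tan_rescale_mem assms by blast
  show "tan_rescale (1 / c) ` {0<..<pi/2} \<subseteq> {0<..<pi/2}"
    using tan_rescale_mem[of "1 / c"] assms by auto
qed

lemma cos_tan_rescale:
  assumes "cos q > 0"
  shows "cos (tan_rescale c q) = cos q / sqrt ((cos q)\<^sup>2 + c\<^sup>2 * (sin q)\<^sup>2)"
proof -
  have "1 + (c * tan q)\<^sup>2 = ((cos q)\<^sup>2 + c\<^sup>2 * (sin q)\<^sup>2) / (cos q)\<^sup>2"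
    using assms by (simp add: tan_def field_simps)
  then have "sqrt (1 + (c * tan q)\<^sup>2) = sqrt ((cos q)\<^sup>2 + c\<^sup>2 * (sin q)\<^sup>2) / cos q"
    using assms by (simp add: real_sqrt_divide)
  then show ?thesis using assms by (simp add: tan_rescale_def cos_arctan)
qed

lemma has_real_derivative_tan_rescale:
  assumes "cos q \<noteq> 0"
  shows "(tan_rescale c has_real_derivative c / ((cos q)\<^sup>2 + c\<^sup>2 * (sin q)\<^sup>2)) (at q)"
proof -
  have "(tan_rescale c has_real_derivative inverse (1 + (c * tan q)\<^sup>2) * (c * inverse ((cos q)\<^sup>2))) (at q)"
    unfolding tan_rescale_def[abs_def] using assms
    by (auto intro!: derivative_eq_intros DERIV_arctan[THEN DERIV_chain2])
  moreover have "inverse (1 + (c * tan q)\<^sup>2) * (c * inverse ((cos q)\<^sup>2)) = c / ((cos q)\<^sup>2 + c\<^sup>2 * (sin q)\<^sup>2)"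
    using assms by (simp add: tan_def field_simps)
  ultimately show ?thesis by simp
qed

lemma
  fixes f :: "real \<Rightarrow> real \<Rightarrow> 'a::euclidean_space" and c :: "real \<Rightarrow> real"
  assumes A: "A \<in> sets lborel" and c: "\<And>x. c x > 0" and c_meas: "c \<in> borel_measurable borel"
    and f: "set_integrable (lborel \<Otimes>\<^sub>M lborel) (A \<times> {0<..<pi/2}) (\<lambda>z. f (fst z) (snd z))"
  shows set_integrable_tan_rescale_snd:
      "set_integrable (lborel \<Otimes>\<^sub>M lborel) (A \<times> {0<..<pi/2})
         (\<lambda>z. (c (fst z) / ((cos (snd z))\<^sup>2 + (c (fst z))\<^sup>2 * (sin (snd z))\<^sup>2)) *\<^sub>R
               f (fst z) (tan_rescale (c (fst z)) (snd z)))"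
    and set_integral_tan_rescale_snd:
      "(LINT x:A|lborel. LINT y:{0<..<pi/2}|lborel.
          (c x / ((cos y)\<^sup>2 + (c x)\<^sup>2 * (sin y)\<^sup>2)) *\<^sub>R f x (tan_rescale (c x) y))
         = (LINT x:A|lborel. LINT y:{0<..<pi/2}|lborel. f x y)"
proof -
  let ?I = "{0<..<pi/2::real}"
  define J where "J x y = c x / ((cos y)\<^sup>2 + (c x)\<^sup>2 * (sin y)\<^sup>2)" for x y
  have cos_pos: "cos y > 0" if "y \<in> ?I" for y
    using that by (auto intro: cos_gt_zero_pi)
  have J: "\<bar>J x y\<bar> = J x y" if "y \<in> ?I" for x y
  proof -
    have "(cos y)\<^sup>2 + (c x)\<^sup>2 * (sin y)\<^sup>2 > 0"
      using cos_pos[OF that] by (simp add: add_pos_nonneg)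
    then show ?thesis unfolding J_def using c[of x] by (intro abs_of_pos divide_pos_pos)
  qed
  have der: "(tan_rescale (c x) has_field_derivative J x y) (at y within ?I)" if "y \<in> ?I" for x y
    unfolding J_def using cos_pos[OF that]
    by (intro has_field_derivative_at_within[OF has_real_derivative_tan_rescale]) simp
  have inj: "inj_on (tan_rescale (c x)) ?I" and img: "tan_rescale (c x) ` ?I = ?I" for x
    using bij_betw_tan_rescale[OF c] by (simp_all add: bij_betw_def)
  note [measurable] = c_meas
  have h_meas: "(\<lambda>z. tan_rescale (c (fst z)) (snd z)) \<in> borel_measurable (lborel \<Otimes>\<^sub>M lborel)"
    by measurable
  have J_meas: "(\<lambda>z. J (fst z) (snd z)) \<in> borel_measurable (lborel \<Otimes>\<^sub>M lborel)"
    unfolding J_def by measurable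
  note subst = set_integrable_substitution_snd[OF A _ _ inj img h_meas J_meas f]
    set_integral_substitution_snd[OF A _ _ inj img h_meas J_meas f]
  have "set_integrable (lborel \<Otimes>\<^sub>M lborel) (A \<times> ?I)
      (\<lambda>z. \<bar>J (fst z) (snd z)\<bar> *\<^sub>R f (fst z) (tan_rescale (c (fst z)) (snd z)))"
    by (rule subst) (auto intro: der)
  then show "set_integrable (lborel \<Otimes>\<^sub>M lborel) (A \<times> ?I)
      (\<lambda>z. J (fst z) (snd z) *\<^sub>R f (fst z) (tan_rescale (c (fst z)) (snd z)))"
    by (rule set_integrable_cong[THEN iffD1, rotated -1]) (auto simp: J)
  have "(LINT x:A|lborel. LINT y:?I|lborel. \<bar>J x y\<bar> *\<^sub>R f x (tan_rescale (c x) y))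
      = (LINT x:A|lborel. LINT y:?I|lborel. f x y)"
    by (rule subst) (auto intro: der)
  moreover have "(LINT y:?I|lborel. \<bar>J x y\<bar> *\<^sub>R f x (tan_rescale (c x) y))
      = (LINT y:?I|lborel. J x y *\<^sub>R f x (tan_rescale (c x) y))" for x
    by (rule set_lebesgue_integral_cong) (auto simp: J)
  ultimately show "(LINT x:A|lborel. LINT y:?I|lborel. J x y *\<^sub>R f x (tan_rescale (c x) y))
      = (LINT x:A|lborel. LINT y:?I|lborel. f x y)"
    by simp
qed

lemma one_minus_mult_pos:
  fixes l u :: real
  assumes "0 < l" "l < 1" "u \<le> 1"
  shows "0 < 1 - l * u"
proof -
  have "l * u \<le> l" using mult_left_mono[OF assms(3), of l] assms(1) by simp
  then show ?thesis using assms(2) by linarith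
qed

(* The integrand after the substitution tan p = sqrt (1 - l cos^2 t) tan q. *)
definition intermediate_integrand :: "(real \<times> real \<Rightarrow> complex) \<Rightarrow> real \<Rightarrow> real \<Rightarrow> real \<Rightarrow> complex" where
  "intermediate_integrand R l t q =
     (1 / (sqrt (1 - l * (cos t)\<^sup>2 * (sin q)\<^sup>2) * sqrt (1 - l * (cos q)\<^sup>2 - l * (cos t)\<^sup>2 * (sin q)\<^sup>2))) *\<^sub>R
       R (cos t, sqrt (1 - l * (cos t)\<^sup>2) * tan q)"

lemma lhs_integrand_tan_rescale:
  fixes l t q :: real
  assumes l: "0 < l" "l < 1" and q: "cos q > 0"
  defines "c \<equiv> sqrt (1 - l * (cos t)\<^sup>2)"
  shows "(c / ((cos q)\<^sup>2 + c\<^sup>2 * (sin q)\<^sup>2)) *\<^sub>R lhs_integrand R l t (tan_rescale c q)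
           = intermediate_integrand R l t q"
proof -
  define A where "A = 1 - l * (cos t)\<^sup>2 * (sin q)\<^sup>2"
  define B where "B = 1 - l * (cos q)\<^sup>2 - l * (cos t)\<^sup>2 * (sin q)\<^sup>2"
  have cos_sin: "(cos t)\<^sup>2 \<le> 1" "(sin q)\<^sup>2 \<le> 1" "(cos q)\<^sup>2 = 1 - (sin q)\<^sup>2"
    by (simp_all add: abs_square_le_1 cos_squared_eq)
  have "(cos t)\<^sup>2 * (sin q)\<^sup>2 \<le> (sin q)\<^sup>2"
    using cos_sin by (simp add: mult_left_le_one_le)
  then have "(cos t)\<^sup>2 * (sin q)\<^sup>2 \<le> 1" "(cos q)\<^sup>2 + (cos t)\<^sup>2 * (sin q)\<^sup>2 \<le> 1"
    using cos_sin by linarith+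
  then have "A > 0" "B > 0" "1 - l * (cos t)\<^sup>2 > 0"
    using one_minus_mult_pos[OF l, of "(cos t)\<^sup>2 * (sin q)\<^sup>2"]
      one_minus_mult_pos[OF l, of "(cos q)\<^sup>2 + (cos t)\<^sup>2 * (sin q)\<^sup>2"]
      one_minus_mult_pos[OF l, of "(cos t)\<^sup>2"] cos_sin(1,2)
    by (simp_all add: A_def B_def algebra_simps)
  then have c: "c > 0" "c\<^sup>2 = 1 - l * (cos t)\<^sup>2"
    by (simp_all add: c_def)
  have den: "(cos q)\<^sup>2 + c\<^sup>2 * (sin q)\<^sup>2 = A"
    by (simp add: c A_def cos_sin algebra_simps)
  have cos: "1 - l * (cos (tan_rescale c q))\<^sup>2 = B / A"
    using \<open>A > 0\<close> q by (simp add: cos_tan_rescale den power_divide field_simps A_def B_def)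
  have "c / A * (1 / (sqrt (B / A) * c)) = 1 / (sqrt A * sqrt B)"
    using \<open>A > 0\<close> \<open>B > 0\<close> c by (simp add: real_sqrt_divide field_simps)
  then show ?thesis
    by (simp add: lhs_integrand_def intermediate_integrand_def tan_tan_rescale den cos A_def B_def flip: c_def)
qed

lemma intermediate_integrand_tan_rescale:
  fixes l s q :: real
  assumes l: "0 < l" "l < 1" and s: "cos s > 0"
  defines "d \<equiv> sqrt (1 - l * (sin q)\<^sup>2)"
  shows "(d / ((cos s)\<^sup>2 + d\<^sup>2 * (sin s)\<^sup>2)) *\<^sub>R intermediate_integrand R l (tan_rescale d s) q
           = mid_integrand R l s q"
proof -
  define D where "D = 1 - l * (sin s)\<^sup>2 * (sin q)\<^sup>2"
  define E where "E = 1 - l + l\<^sup>2 * (sin s)\<^sup>2 * (sin q)\<^sup>2 * (cos q)\<^sup>2"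
  define N where "N = 1 - l * (1 - (sin s)\<^sup>2 * (cos q)\<^sup>2)"
  have sin_le: "(sin s)\<^sup>2 \<le> 1" "(sin q)\<^sup>2 \<le> 1"
    by (simp_all add: abs_square_le_1)
  then have "(sin s)\<^sup>2 * (sin q)\<^sup>2 \<le> 1"
    by (simp add: mult_le_one)
  then have "D > 0" "1 - l * (sin q)\<^sup>2 > 0" "E > 0"
    using one_minus_mult_pos[OF l, of "(sin s)\<^sup>2 * (sin q)\<^sup>2"] one_minus_mult_pos[OF l, of "(sin q)\<^sup>2"]
      sin_le l by (simp_all add: D_def E_def mult.assoc add_pos_nonneg)
  then have d: "d > 0" "d\<^sup>2 = 1 - l * (sin q)\<^sup>2"
    by (simp_all add: d_def)
  have den: "(cos s)\<^sup>2 + d\<^sup>2 * (sin s)\<^sup>2 = D"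
    by (simp add: d D_def cos_squared_eq algebra_simps)
  have cos: "cos (tan_rescale d s) = cos s / sqrt D"
    using s by (simp add: cos_tan_rescale den)
  have cos2: "(cos (tan_rescale d s))\<^sup>2 = (cos s)\<^sup>2 / D"
    using \<open>D > 0\<close> by (simp add: cos power_divide)
  have "1 - l * (cos (tan_rescale d s))\<^sup>2 * (sin q)\<^sup>2 = d\<^sup>2 / D"
    "1 - l * (cos q)\<^sup>2 - l * (cos (tan_rescale d s))\<^sup>2 * (sin q)\<^sup>2 = E / D"
    "1 - l * (cos (tan_rescale d s))\<^sup>2 = N / D"
    unfolding cos2 d(2) using \<open>D > 0\<close>
    by (simp_all add: D_def E_def N_def cos_squared_eq field_simps) (simp_all add: algebra_simps power2_eq_square)
  moreover have "d / D * (1 / (sqrt (d\<^sup>2 / D) * sqrt (E / D))) = 1 / sqrt E"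
    using \<open>D > 0\<close> \<open>E > 0\<close> d by (simp add: real_sqrt_divide field_simps)
  ultimately show ?thesis
    by (simp add: intermediate_integrand_def mid_integrand_def den cos D_def E_def N_def)
qed

lemma
  fixes R :: "real \<times> real \<Rightarrow> complex"
  assumes l: "0 < l" "l < 1"
    and lhs: "set_integrable (lborel \<Otimes>\<^sub>M lborel) ({0<..<pi/2} \<times> {0<..<pi/2})
                (\<lambda>z. lhs_integrand R l (fst z) (snd z))"
  shows set_integrable_intermediate_integrand:
      "set_integrable (lborel \<Otimes>\<^sub>M lborel) ({0<..<pi/2} \<times> {0<..<pi/2})
         (\<lambda>z. intermediate_integrand R l (fst z) (snd z))"
    and iterated_lhs_integral_eq_intermediate:
      "(LINT t:{0<..<pi/2}|lborel. LINT p:{0<..<pi/2}|lborel. lhs_integrand R l t p)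
         = (LINT t:{0<..<pi/2}|lborel. LINT q:{0<..<pi/2}|lborel. intermediate_integrand R l t q)"
proof -
  let ?I = "{0<..<pi/2::real}"
  define c where "c t = sqrt (1 - l * (cos t)\<^sup>2)" for t
  have c_pos: "c t > 0" for t
    using one_minus_mult_pos[OF l, of "(cos t)\<^sup>2"] by (simp add: c_def abs_square_le_1)
  have c_meas: "c \<in> borel_measurable borel"
    unfolding c_def by measurable
  have eq: "(c t / ((cos q)\<^sup>2 + (c t)\<^sup>2 * (sin q)\<^sup>2)) *\<^sub>R lhs_integrand R l t (tan_rescale (c t) q)
      = intermediate_integrand R l t q" if "q \<in> ?I" for t q
    using lhs_integrand_tan_rescale[OF l, of q t R] that cos_gt_zero_pi[of q] by (simp add: c_def)
  note subst = set_integrable_tan_rescale_snd[OF _ c_pos c_meas lhs]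
    set_integral_tan_rescale_snd[OF _ c_pos c_meas lhs]
  show "set_integrable (lborel \<Otimes>\<^sub>M lborel) (?I \<times> ?I) (\<lambda>z. intermediate_integrand R l (fst z) (snd z))"
    using subst(1) by (rule set_integrable_cong[THEN iffD1, rotated -1]) (auto simp: eq)
  have "(LINT q:?I|lborel. intermediate_integrand R l t q)
      = (LINT q:?I|lborel. (c t / ((cos q)\<^sup>2 + (c t)\<^sup>2 * (sin q)\<^sup>2)) *\<^sub>R lhs_integrand R l t (tan_rescale (c t) q))"
    for t by (rule set_lebesgue_integral_cong) (auto simp: eq)
  with subst(2) show "(LINT t:?I|lborel. LINT p:?I|lborel. lhs_integrand R l t p)
      = (LINT t:?I|lborel. LINT q:?I|lborel. intermediate_integrand R l t q)"
    by simp
qed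

lemma iterated_intermediate_integral_eq_mid:
  fixes R :: "real \<times> real \<Rightarrow> complex"
  assumes l: "0 < l" "l < 1"
    and int: "set_integrable (lborel \<Otimes>\<^sub>M lborel) ({0<..<pi/2} \<times> {0<..<pi/2})
                (\<lambda>z. intermediate_integrand R l (fst z) (snd z))"
  shows "(LINT q:{0<..<pi/2}|lborel. LINT t:{0<..<pi/2}|lborel. intermediate_integrand R l t q)
           = (LINT q:{0<..<pi/2}|lborel. LINT s:{0<..<pi/2}|lborel. mid_integrand R l s q)"
proof -
  let ?I = "{0<..<pi/2::real}"
  define d where "d q = sqrt (1 - l * (sin q)\<^sup>2)" for q
  have d_pos: "d q > 0" for q
    using one_minus_mult_pos[OF l, of "(sin q)\<^sup>2"] by (simp add: d_def abs_square_le_1)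
  have d_meas: "d \<in> borel_measurable borel"
    unfolding d_def by measurable
  have eq: "(d q / ((cos s)\<^sup>2 + (d q)\<^sup>2 * (sin s)\<^sup>2)) *\<^sub>R intermediate_integrand R l (tan_rescale (d q) s) q
      = mid_integrand R l s q" if "s \<in> ?I" for s q
    using intermediate_integrand_tan_rescale[OF l, of s q R] that cos_gt_zero_pi[of s] by (simp add: d_def)
  have "(LINT s:?I|lborel. mid_integrand R l s q)
      = (LINT s:?I|lborel. (d q / ((cos s)\<^sup>2 + (d q)\<^sup>2 * (sin s)\<^sup>2)) *\<^sub>R
                             intermediate_integrand R l (tan_rescale (d q) s) q)"
    for q by (rule set_lebesgue_integral_cong) (auto simp: eq)
  with set_integral_tan_rescale_snd[OF _ d_pos d_meas lborel_pair.set_integrable_pair_swap[OF int]]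
  show ?thesis by simp
qed

lemma octant_surface_integrand_rhs_integrand:
  assumes l: "0 < l" "l < 1" and z: "z \<in> octant_square"
  shows "octant_surface_integrand (rhs_integrand R l) z = mid_integrand R l (fst z) (snd z)"
proof -
  obtain t p where tp: "z = (t, p)" "t \<in> {0<..<pi/2}" "p \<in> {0<..<pi/2}"
    using z by (auto simp: octant_square_def)
  have sin_t: "sin t > 0"
    using tp by (auto intro: sin_gt_zero)
  define E where "E = 1 - l + l\<^sup>2 * (sin t)\<^sup>2 * (sin p)\<^sup>2 * (cos p)\<^sup>2"
  have "E > 0"
    using l by (simp add: E_def add_pos_nonneg)
  have "(1 - l) * (1 - (cos t)\<^sup>2) + l\<^sup>2 * (sin t * sin p)\<^sup>2 * (sin t * cos p)\<^sup>2 = (sin t)\<^sup>2 * E"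
    by (simp add: E_def sin_squared_eq[symmetric] power_mult_distrib algebra_simps)
  then have jacobian:
    "sin t * (1 / sqrt ((1 - l) * (1 - (cos t)\<^sup>2) + l\<^sup>2 * (sin t * sin p)\<^sup>2 * (sin t * cos p)\<^sup>2))
       = 1 / sqrt E"
    using sin_t \<open>E > 0\<close> by (simp add: real_sqrt_mult)
  have "sin t * sin p / (sin t * cos p) = tan p"
    using sin_t by (simp add: tan_def)
  moreover have "1 - l * (sin t * sin p)\<^sup>2 = 1 - l * (sin t)\<^sup>2 * (sin p)\<^sup>2"
    "1 - l * (1 - (sin t * cos p)\<^sup>2) = 1 - l * (1 - (sin t)\<^sup>2 * (cos p)\<^sup>2)"
    by (simp_all add: power_mult_distrib)
  ultimately show ?thesis
    unfolding tp octant_surface_integrand_def octant_param_def rhs_integrand_def mid_integrand_def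
    by (simp only: fst_conv snd_conv prod.case scaleR_scaleR jacobian E_def)
qed

theorem lemma3p4:
  fixes R :: "real \<times> real \<Rightarrow> complex" and l :: real
  assumes meas: "set_borel_measurable borel ({0..1} \<times> {0..}) R"
    and l: "0 < l" "l < 1"
    and int1: "set_integrable (lborel \<Otimes>\<^sub>M lborel) octant_square
                 (\<lambda>q. lhs_integrand R l (fst q) (snd q))"
    and int2: "set_integrable (lborel \<Otimes>\<^sub>M lborel) octant_square
                 (\<lambda>q. mid_integrand R l (fst q) (snd q))"
    and int3: "set_integrable (lborel \<Otimes>\<^sub>M lborel) octant_square
                 (octant_surface_integrand (rhs_integrand R l))"
  shows "((LINT t:{0<..<pi/2}|lborel. (LINT p:{0<..<pi/2}|lborel. lhs_integrand R l t p))
           = (LINT t:{0<..<pi/2}|lborel. (LINT p:{0<..<pi/2}|lborel. mid_integrand R l t p)) \<and>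
         (LINT t:{0<..<pi/2}|lborel. (LINT p:{0<..<pi/2}|lborel. mid_integrand R l t p))
           = octant_surface_integral (rhs_integrand R l))"
proof
  let ?I = "{0<..<pi/2::real}"
  note int1 = int1[unfolded octant_square_def] and int2 = int2[unfolded octant_square_def]
  note int_intermediate = set_integrable_intermediate_integrand[OF l int1]
  have "(LINT t:?I|lborel. LINT p:?I|lborel. lhs_integrand R l t p)
      = (LINT t:?I|lborel. LINT q:?I|lborel. intermediate_integrand R l t q)"
    by (rule iterated_lhs_integral_eq_intermediate[OF l int1])
  also have "\<dots> = (LINT q:?I|lborel. LINT t:?I|lborel. intermediate_integrand R l t q)"
    by (rule lborel_pair.set_Fubini_integral[OF int_intermediate, symmetric])
  also have "\<dots> = (LINT q:?I|lborel. LINT s:?I|lborel. mid_integrand R l s q)"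
    by (rule iterated_intermediate_integral_eq_mid[OF l int_intermediate])
  also have "\<dots> = (LINT s:?I|lborel. LINT q:?I|lborel. mid_integrand R l s q)"
    by (rule lborel_pair.set_Fubini_integral[OF int2])
  finally show "(LINT t:?I|lborel. LINT p:?I|lborel. lhs_integrand R l t p)
      = (LINT t:?I|lborel. LINT p:?I|lborel. mid_integrand R l t p)" .
  have "octant_surface_integral (rhs_integrand R l)
      = (LINT z:?I \<times> ?I|lborel \<Otimes>\<^sub>M lborel. mid_integrand R l (fst z) (snd z))"
    unfolding octant_surface_integral_def octant_square_def
    using octant_surface_integrand_rhs_integrand[OF l]
    by (intro set_lebesgue_integral_cong) (auto simp: octant_square_def)
  also have "\<dots> = (LINT t:?I|lborel. LINT p:?I|lborel. mid_integrand R l t p)"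
    by (rule lborel_pair.set_integral_pair_eq_iterated[OF int2])
  finally show "(LINT t:?I|lborel. LINT p:?I|lborel. mid_integrand R l t p)
      = octant_surface_integral (rhs_integrand R l)" ..
qed

end
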